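(* Let $X,Y$ be $c$-free with respect to $(\varphi,\psi)$ on $\mathbb{C}\langle X,Y\rangle$, let $A,B\in M_N(\mathbb{C})$, $\mathbf{\Psi}=(I-z(AX+BY))^{-1}$, and $F^\varphi_X=\beta^{\delta,\varphi}_X(X\mathbf{\Psi})$, $F^\varphi_Y=\beta^{\delta,\varphi}_Y(Y\mathbf{\Psi})$. Then $$M^\varphi_{AX+BY}(z):=\varphi(\mathbf{\Psi})=(I-zAF^\varphi_X-zBF^\varphi_Y)^{-1}.$$ Consequently, if $P\in\mathbb{C}\langle X,Y\rangle$ has degree $m$ and $u,v\in\mathbb{C}^N$ are such that $(1-z^mP)^{-1}=u^t\mathbf{\Psi}v$ as formal power series, then $M^\varphi_{P}(z^m):=\sum_{n\ge0}\varphi(P^n)z^{mn}=u^tM^\varphi_{AX+BY}(z)v$.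
   Context: $X,Y$ are $c$-free w.r.t. $(\varphi,\psi)$ (unital functionals on $\mathbb{C}\langle X,Y\rangle$) if $\psi(u_1\cdots u_n)=0$ and $\varphi(u_1\cdots u_n)=\prod\varphi(u_j)$ whenever the $u_j$ alternate between $\mathbb{C}\langle X\rangle$ and $\mathbb{C}\langle Y\rangle$ and $\psi(u_j)=0$. Boolean cumulants $\beta^\theta_n$ of $\theta$: $\theta(a_1\cdots a_n)=\sum_{k}\beta^\theta_k(a_1,\dots,a_k)\theta(a_{k+1}\cdots a_n)$. $\beta^{\delta,\varphi}_X(1)=1$ and $\beta^{\delta,\varphi}_X(Z_1\cdots Z_k)=\beta^\varphi_k(Z_1,\dots,Z_k)$ ($Z_i\in\{X,Y\}$) if $Z_1=Z_k=X$, else $0$; $\beta^{\delta,\varphi}_Y$ analogously; extended linearly. $\mathbf{\Psi}=\sum_n z^n(AX+BY)^n$; functionals act entrywise on matrices and coefficientwise on formal power series in $z$, and inverses are formal power series inverses. *)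

theory Defs
  imports "HOL-Analysis.Analysis" "HOL-Computational_Algebra.Formal_Power_Series"
begin

datatype L = LX | LY

type_synonym word = "L list"

text \<open>A (noncommutative) polynomial is a finitely supported coefficient function on words.\<close>
type_synonym ncp = "word \<Rightarrow> complex"

definition ncfin :: "ncp \<Rightarrow> bool" where
  "ncfin p \<longleftrightarrow> finite {w. p w \<noteq> 0}"

definition ncone :: ncp where
  "ncone = (\<lambda>w. if w = [] then 1 else 0)"

definition ncvar :: "L \<Rightarrow> ncp" where
  "ncvar l = (\<lambda>w. if w = [l] then 1 else 0)"

definition ncmul :: "ncp \<Rightarrow> ncp \<Rightarrow> ncp" where
  "ncmul p q = (\<lambda>w. \<Sum>k\<in>{0..length w}. p (take k w) * q (drop k w))"

definition ncpow :: "ncp \<Rightarrow> nat \<Rightarrow> ncp" where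
  "ncpow p n = (ncmul p ^^ n) ncone"

definition ncprod :: "ncp list \<Rightarrow> ncp" where
  "ncprod ps = foldr ncmul ps ncone"

definition ncdeg :: "ncp \<Rightarrow> nat" where
  "ncdeg p = Max (insert 0 (length ` {w. p w \<noteq> 0}))"

text \<open>Subalgebra C<X> (b = True) resp. C<Y> (b = False).\<close>
definition ncalg :: "bool \<Rightarrow> ncp set" where
  "ncalg b = {p. \<forall>w. p w \<noteq> 0 \<longrightarrow> set w \<subseteq> {if b then LX else LY}}"

text \<open>A linear functional on C<X,Y> is determined by its values on words;
  \<open>lin \<theta> p\<close> is its linear extension.\<close>
definition lin :: "(word \<Rightarrow> complex) \<Rightarrow> ncp \<Rightarrow> complex" where
  "lin \<theta> p = (\<Sum>w\<in>{w. p w \<noteq> 0}. p w * \<theta> w)"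

definition cfree :: "(word \<Rightarrow> complex) \<Rightarrow> (word \<Rightarrow> complex) \<Rightarrow> bool" where
  "cfree \<phi> \<psi> \<longleftrightarrow>
    (\<forall>us :: (bool \<times> ncp) list.
       us \<noteq> [] \<longrightarrow>
       (\<forall>(b, u)\<in>set us. ncfin u \<and> u \<in> ncalg b \<and> lin \<psi> u = 0) \<longrightarrow>
       successively (\<noteq>) (map fst us) \<longrightarrow>
       lin \<psi> (ncprod (map snd us)) = 0 \<and>
       lin \<phi> (ncprod (map snd us)) = (\<Prod>u\<leftarrow>map snd us. lin \<phi> u))"

text \<open>\<open>bcum \<theta> [Z1,...,Zk] = \<beta>^\<theta>_k(Z1,...,Zk)\<close>, determined by the recursion
  \<open>\<theta>(Z1...Zn) = \<Sum>_{k=1}^n \<beta>_k(Z1..Zk) \<theta>(Z_{k+1}...Zn)\<close> (with \<open>\<theta>(1) = 1\<close>).\<close>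
function bcum :: "(word \<Rightarrow> complex) \<Rightarrow> word \<Rightarrow> complex" where
  "bcum \<theta> w = (if w = [] then 0 else
     \<theta> w - (\<Sum>k\<in>{1..<length w}. bcum \<theta> (take k w) * \<theta> (drop k w)))"
  by pat_completeness auto
termination
  by (relation "Wellfounded.measure (\<lambda>(\<theta>, w). length w)") auto

definition bdelta :: "L \<Rightarrow> (word \<Rightarrow> complex) \<Rightarrow> word \<Rightarrow> complex" where
  "bdelta l \<phi> w = (if w = [] then 1
                    else if hd w = l \<and> last w = l then bcum \<phi> w else 0)"

definition linpenc :: "complex^'n^'n \<Rightarrow> complex^'n^'n \<Rightarrow> 'n \<Rightarrow> 'n \<Rightarrow> ncp" where
  "linpenc A B i j = (\<lambda>w. if w = [LX] then A$i$j else if w = [LY] then B$i$j else 0)"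

definition ncmatmul :: "('n::finite \<Rightarrow> 'n \<Rightarrow> ncp) \<Rightarrow> ('n \<Rightarrow> 'n \<Rightarrow> ncp) \<Rightarrow> 'n \<Rightarrow> 'n \<Rightarrow> ncp" where
  "ncmatmul P Q i j = (\<lambda>w. \<Sum>k\<in>UNIV. ncmul (P i k) (Q k j) w)"

definition ncmatone :: "'n \<Rightarrow> 'n \<Rightarrow> ncp" where
  "ncmatone i j = (if i = j then ncone else (\<lambda>w. 0))"

text \<open>\<open>Psi A B n\<close> is the coefficient of \<open>z^n\<close> of \<Psi>, i.e. the matrix \<open>(AX+BY)^n\<close>.\<close>
definition Psi :: "complex^'n^'n \<Rightarrow> complex^'n^'n \<Rightarrow> nat \<Rightarrow> 'n::finite \<Rightarrow> 'n \<Rightarrow> ncp" where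
  "Psi A B n = (ncmatmul (linpenc A B) ^^ n) ncmatone"

text \<open>Moment series \<open>M^\<phi>_{AX+BY}(z) = \<phi>(\<Psi>)\<close> (entrywise, coefficientwise).\<close>
definition Mom :: "(word \<Rightarrow> complex) \<Rightarrow> complex^'n^'n \<Rightarrow> complex^'n^'n \<Rightarrow> complex fps^'n^'n::finite" where
  "Mom \<phi> A B = (\<chi> i j. Abs_fps (\<lambda>n. lin \<phi> (Psi A B n i j)))"

definition Fser :: "L \<Rightarrow> (word \<Rightarrow> complex) \<Rightarrow> complex^'n^'n \<Rightarrow> complex^'n^'n \<Rightarrow> complex fps^'n^'n::finite" where
  "Fser l \<phi> A B = (\<chi> i j. Abs_fps (\<lambda>n. lin (bdelta l \<phi>) (ncmul (ncvar l) (Psi A B n i j))))"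

definition zmat :: "complex^'n^'n \<Rightarrow> complex fps^'n^'n" where
  "zmat A = (\<chi> i j. fps_X * fps_const (A$i$j))"

end

theory Submission
  imports Defs "HOL-Computational_Algebra.Polynomial_Factorial"
begin

(* Write M_n, F_X,n, F_Y,n for the coefficients of z^n in M = \<phi>(\<Psi>), F_X, F_Y. Expanding the
   moment \<phi>(w) of every word w of length n+1 by the defining recursion of the Boolean cumulants,
   \<phi>(w) = \<Sum>_s \<beta>(w_1...w_s) \<phi>(w_(s+1)...w_(n+1)), and weighting w by its matrix coefficient
   in (AX+BY)^(n+1) gives M_(n+1) = \<Sum>_t (A F_X,t + B F_Y,t) M_(n-t), that is
   (I - zAF_X - zBF_Y) M = I; over the integral domain C[[z]] this right inverse is two-sided.
   The recursion needs \<beta>(w) = 0 whenever w starts and ends with different letters, and this is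
   where c-freeness enters. The element w - \<Sum>_k \<beta>(w_1...w_k) w_(k+1)...w_n lies in the span of
   alternating products u_1...u_r with \<phi>(u_1) = 0, \<psi>(u_i) = 0 for i \<ge> 2, and u_1 in the
   algebra of the first letter of w. By c-freeness \<phi> vanishes on that span, and right
   multiplication by a letter c maps it into itself plus scalars; applying \<phi> shows that the
   scalar is \<beta>(wc), and it vanishes unless c lies in the algebra of u_1.
   The statement about P is then linearity of \<phi>. *)

section \<open>Noncommutative polynomials\<close>

lemma UNIV_L: "(UNIV :: L set) = {LX, LY}"
  using L.exhaust by auto

instance L :: finite
  by standard (simp add: UNIV_L)

definition splits :: "word \<Rightarrow> (word \<times> word) set" where
  "splits w = {(u, v). u @ v = w}"

lemma bij_betw_splits: "bij_betw (\<lambda>k. (take k w, drop k w)) {0..length w} (splits w)"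
  by (rule bij_betw_byWitness[where f' = "\<lambda>(u, v). length u"]) (auto simp: splits_def)

lemma finite_splits [simp]: "finite (splits w)"
  using bij_betw_finite bij_betw_splits by blast

lemma ncmul_splits: "ncmul p q w = (\<Sum>(u, v)\<in>splits w. p u * q v)"
  unfolding ncmul_def using sum.reindex_bij_betw[OF bij_betw_splits, of "\<lambda>(u, v). p u * q v" w]
  by simp

lemma ncmul_assoc: "ncmul (ncmul p q) r = ncmul p (ncmul q r)"
proof
  fix w
  have "ncmul (ncmul p q) r w = (\<Sum>ac\<in>splits w. \<Sum>xy\<in>splits (fst ac). p (fst xy) * q (snd xy) * r (snd ac))"
    by (simp add: ncmul_splits sum_distrib_right case_prod_beta)
  also have "\<dots> = (\<Sum>(ac, xy)\<in>Sigma (splits w) (\<lambda>ac. splits (fst ac)). p (fst xy) * q (snd xy) * r (snd ac))"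
    by (rule sum.Sigma) auto
  also have "\<dots> = (\<Sum>(x, y, z)\<in>{(x, y, z). x @ y @ z = w}. p x * q y * r z)"
    by (rule sum.reindex_bij_witness[where j = "\<lambda>((a, c), (x, y)). (x, y, c)"
          and i = "\<lambda>(x, y, z). ((x @ y, z), (x, y))"]) (auto simp: splits_def)
  also have "\<dots> = (\<Sum>(ac, xy)\<in>Sigma (splits w) (\<lambda>ac. splits (snd ac)). p (fst ac) * q (fst xy) * r (snd xy))"
    by (rule sum.reindex_bij_witness[where j = "\<lambda>(x, y, z). ((x, y @ z), (y, z))"
          and i = "\<lambda>((a, c), (x, y)). (a, x, y)"]) (auto simp: splits_def)
  also have "\<dots> = (\<Sum>ac\<in>splits w. \<Sum>xy\<in>splits (snd ac). p (fst ac) * q (fst xy) * r (snd xy))"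
    by (rule sum.Sigma[symmetric]) auto
  also have "\<dots> = ncmul p (ncmul q r) w"
    by (simp add: ncmul_splits sum_distrib_left case_prod_beta mult.assoc)
  finally show "ncmul (ncmul p q) r w = ncmul p (ncmul q r) w" .
qed

lemma ncmul_add_left: "ncmul (\<lambda>w. p w + q w) r = (\<lambda>w. ncmul p r w + ncmul q r w)"
  by (simp add: ncmul_def algebra_simps sum.distrib fun_eq_iff)

lemma ncmul_diff_left: "ncmul (\<lambda>w. p w - q w) r = (\<lambda>w. ncmul p r w - ncmul q r w)"
  by (simp add: ncmul_def algebra_simps sum_subtractf fun_eq_iff)

lemma ncmul_diff_right: "ncmul r (\<lambda>w. p w - q w) = (\<lambda>w. ncmul r p w - ncmul r q w)"
  by (simp add: ncmul_def algebra_simps sum_subtractf fun_eq_iff)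

lemma ncmul_smult_left: "ncmul (\<lambda>w. c * p w) r = (\<lambda>w. c * ncmul p r w)"
  by (simp add: ncmul_def sum_distrib_left mult.assoc fun_eq_iff)

lemma ncmul_smult_right: "ncmul r (\<lambda>w. c * p w) = (\<lambda>w. c * ncmul r p w)"
  by (simp add: ncmul_def sum_distrib_left algebra_simps fun_eq_iff)

lemma ncmul_sum_left: "ncmul (\<lambda>w. \<Sum>k\<in>K. f k w) r = (\<lambda>w. \<Sum>k\<in>K. ncmul (f k) r w)"
  unfolding ncmul_def by (rule ext) (simp add: sum_distrib_right, rule sum.swap)

definition ncmon :: "word \<Rightarrow> ncp" where
  "ncmon u = (\<lambda>w. if w = u then 1 else 0)"

lemma ncone_eq_ncmon: "ncone = ncmon []"
  by (simp add: ncone_def ncmon_def fun_eq_iff)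

lemma ncvar_eq_ncmon: "ncvar c = ncmon [c]"
  by (simp add: ncvar_def ncmon_def fun_eq_iff)

lemma ncmul_ncmon: "ncmul (ncmon u) (ncmon v) = ncmon (u @ v)"
proof
  fix w
  have "ncmul (ncmon u) (ncmon v) w = (\<Sum>x\<in>splits w. if x = (u, v) then 1 else 0)"
    unfolding ncmul_splits by (rule sum.cong) (auto simp: ncmon_def split: if_splits)
  also have "\<dots> = ncmon (u @ v) w"
    by (subst sum.delta[OF finite_splits]) (auto simp: splits_def ncmon_def)
  finally show "ncmul (ncmon u) (ncmon v) w = ncmon (u @ v) w" .
qed

lemma ncmul_one_left [simp]: "ncmul ncone p = p"
proof
  fix w
  have "ncmul ncone p w = (\<Sum>x\<in>splits w. if x = ([], w) then p (snd x) else 0)"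
    unfolding ncmul_splits by (rule sum.cong) (auto simp: ncone_def splits_def split: if_splits)
  also have "\<dots> = p w"
    by (subst sum.delta[OF finite_splits]) (auto simp: splits_def)
  finally show "ncmul ncone p w = p w" .
qed

lemma ncmul_one_right [simp]: "ncmul p ncone = p"
proof
  fix w
  have "ncmul p ncone w = (\<Sum>x\<in>splits w. if x = (w, []) then p (fst x) else 0)"
    unfolding ncmul_splits by (rule sum.cong) (auto simp: ncone_def splits_def split: if_splits)
  also have "\<dots> = p w"
    by (subst sum.delta[OF finite_splits]) (auto simp: splits_def)
  finally show "ncmul p ncone w = p w" .
qed

lemma ncmul_nonzero:
  assumes "ncmul p q w \<noteq> 0"
  obtains u v where "u @ v = w" "p u \<noteq> 0" "q v \<noteq> 0"
  using assms sum.neutral[of "splits w" "\<lambda>(u, v). p u * q v"] that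
  by (fastforce simp: ncmul_splits splits_def)

lemma ncmul_single_letters_left:
  assumes "\<And>u. p u \<noteq> 0 \<Longrightarrow> length u = 1"
  shows "ncmul p q w = (if w = [] then 0 else p [hd w] * q (tl w))"
proof -
  have "p (take k w) * q (drop k w) = (if k = 1 \<and> w \<noteq> [] then p [hd w] * q (tl w) else 0)"
    if "k \<le> length w" for k
  proof (cases "k = 1 \<and> w \<noteq> []")
    case True
    then show ?thesis by (cases w) auto
  next
    case False
    then have "length (take k w) \<noteq> 1"
      using that by auto
    then show ?thesis
      using False assms by force
  qed
  then have "ncmul p q w = (\<Sum>k\<in>{0..length w}. if k = 1 \<and> w \<noteq> [] then p [hd w] * q (tl w) else 0)"
    unfolding ncmul_def by (intro sum.cong) auto
  then show ?thesis
    by (cases "w = []") (simp_all add: sum.delta Suc_le_eq)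
qed

lemma ncmul_ncvar_left: "ncmul (ncvar l) p w = (if w \<noteq> [] \<and> hd w = l then p (tl w) else 0)"
  by (subst ncmul_single_letters_left) (auto simp: ncvar_def split: if_splits)

lemma ncfin_ncmul: "ncfin p \<Longrightarrow> ncfin q \<Longrightarrow> ncfin (ncmul p q)"
  unfolding ncfin_def
  by (rule finite_subset[of _ "(\<lambda>(u, v). u @ v) ` ({w. p w \<noteq> 0} \<times> {w. q w \<noteq> 0})"])
     (auto elim!: ncmul_nonzero)

lemma ncfin_ncmon [simp]: "ncfin (ncmon u)"
  by (simp add: ncfin_def ncmon_def)

lemma ncfin_ncone [simp]: "ncfin ncone"
  by (simp add: ncone_eq_ncmon)

lemma ncfin_ncvar [simp]: "ncfin (ncvar c)"
  by (simp add: ncvar_eq_ncmon)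

lemma ncfin_zero [simp]: "ncfin (\<lambda>w. 0)"
  by (simp add: ncfin_def)

lemma ncfin_add: "ncfin p \<Longrightarrow> ncfin q \<Longrightarrow> ncfin (\<lambda>w. p w + q w)"
  unfolding ncfin_def by (rule finite_subset[of _ "{w. p w \<noteq> 0} \<union> {w. q w \<noteq> 0}"]) auto

lemma ncfin_diff: "ncfin p \<Longrightarrow> ncfin q \<Longrightarrow> ncfin (\<lambda>w. p w - q w)"
  unfolding ncfin_def by (rule finite_subset[of _ "{w. p w \<noteq> 0} \<union> {w. q w \<noteq> 0}"]) auto

lemma ncfin_smult: "ncfin p \<Longrightarrow> ncfin (\<lambda>w. c * p w)"
  unfolding ncfin_def by (rule finite_subset[of _ "{w. p w \<noteq> 0}"]) auto

lemma ncfin_sum: "(\<And>k. k \<in> K \<Longrightarrow> ncfin (f k)) \<Longrightarrow> ncfin (\<lambda>w. \<Sum>k\<in>K. f k w)"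
  by (induction K rule: infinite_finite_induct) (simp_all add: ncfin_add)

lemma ncfin_ncprod: "(\<And>p. p \<in> set ps \<Longrightarrow> ncfin p) \<Longrightarrow> ncfin (ncprod ps)"
  by (induction ps) (auto simp: ncprod_def intro: ncfin_ncmul)

lemma ncalg_ncmul: "p \<in> ncalg b \<Longrightarrow> q \<in> ncalg b \<Longrightarrow> ncmul p q \<in> ncalg b"
  unfolding ncalg_def by (fastforce elim!: ncmul_nonzero)

lemma ncalg_ncone [simp]: "ncone \<in> ncalg b"
  by (simp add: ncalg_def ncone_def)

lemma ncalg_ncvar: "ncvar c \<in> ncalg (c = LX)"
  by (cases c) (auto simp: ncalg_def ncvar_def)

lemma ncalg_diff:
  assumes "p \<in> ncalg b" "q \<in> ncalg b"
  shows "(\<lambda>w. p w - q w) \<in> ncalg b"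
proof -
  have "p w \<noteq> 0 \<or> q w \<noteq> 0" if "p w - q w \<noteq> 0" for w
    using that by auto
  then show ?thesis
    using assms unfolding ncalg_def by blast
qed

lemma ncalg_smult: "p \<in> ncalg b \<Longrightarrow> (\<lambda>w. c * p w) \<in> ncalg b"
  unfolding ncalg_def by auto

lemma lin_eq_sum_superset:
  "finite W \<Longrightarrow> {w. p w \<noteq> 0} \<subseteq> W \<Longrightarrow> lin \<theta> p = (\<Sum>w\<in>W. p w * \<theta> w)"
  unfolding lin_def by (rule sum.mono_neutral_left) auto

lemma lin_zero [simp]: "lin \<theta> (\<lambda>w. 0) = 0"
  by (simp add: lin_def)

lemma lin_add:
  assumes "ncfin p" "ncfin q"
  shows "lin \<theta> (\<lambda>w. p w + q w) = lin \<theta> p + lin \<theta> q"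
proof -
  let ?W = "{w. p w \<noteq> 0} \<union> {w. q w \<noteq> 0}"
  have W: "finite ?W"
    using assms by (simp add: ncfin_def)
  have "lin \<theta> (\<lambda>w. p w + q w) = (\<Sum>w\<in>?W. p w * \<theta> w) + (\<Sum>w\<in>?W. q w * \<theta> w)"
    by (subst lin_eq_sum_superset[OF W]) (auto simp: algebra_simps sum.distrib)
  then show ?thesis
    using lin_eq_sum_superset[OF W, of p \<theta>] lin_eq_sum_superset[OF W, of q \<theta>] by auto
qed

lemma lin_smult: "lin \<theta> (\<lambda>w. c * p w) = c * lin \<theta> p"
  by (cases "c = 0") (simp_all add: lin_def sum_distrib_left mult.assoc)

lemma lin_diff: "ncfin p \<Longrightarrow> ncfin q \<Longrightarrow> lin \<theta> (\<lambda>w. p w - q w) = lin \<theta> p - lin \<theta> q"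
  using lin_add[of p "\<lambda>w. - 1 * q w" \<theta>] lin_smult[of \<theta> "- 1" q] ncfin_smult[of q "- 1"] by simp

lemma lin_sum: "(\<And>k. k \<in> K \<Longrightarrow> ncfin (f k)) \<Longrightarrow> lin \<theta> (\<lambda>w. \<Sum>k\<in>K. f k w) = (\<Sum>k\<in>K. lin \<theta> (f k))"
proof (induction K rule: infinite_finite_induct)
  case (insert k K)
  then show ?case
    using lin_add[of "f k" "\<lambda>w. \<Sum>k\<in>K. f k w" \<theta>] by (simp add: ncfin_sum)
qed simp_all

lemma lin_ncmon [simp]: "lin \<theta> (ncmon u) = \<theta> u"
  by (subst lin_eq_sum_superset[of "{u}"]) (auto simp: ncmon_def)

lemma lin_ncone: "lin \<theta> ncone = \<theta> []"
  by (simp add: ncone_eq_ncmon)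

lemma ncprod_Cons: "ncprod (p # ps) = ncmul p (ncprod ps)"
  by (simp add: ncprod_def)

lemma ncprod_snoc: "ncprod (ps @ [p]) = ncmul (ncprod ps) p"
  by (induction ps) (auto simp: ncprod_def ncmul_assoc)

lemma ncprod_single [simp]: "ncprod [p] = p"
  by (simp add: ncprod_def)

definition nccenter :: "(word \<Rightarrow> complex) \<Rightarrow> ncp \<Rightarrow> ncp" where
  "nccenter \<theta> p = (\<lambda>w. p w - lin \<theta> p * ncone w)"

lemma ncmul_nccenter_left: "ncmul p q = (\<lambda>w. ncmul (nccenter \<theta> p) q w + lin \<theta> p * q w)"
  by (simp add: nccenter_def ncmul_diff_left ncmul_smult_left)

lemma ncmul_nccenter_right: "ncmul p q = (\<lambda>w. ncmul p (nccenter \<theta> q) w + lin \<theta> q * p w)"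
  by (simp add: nccenter_def ncmul_diff_right ncmul_smult_right)

lemma ncfin_nccenter: "ncfin p \<Longrightarrow> ncfin (nccenter \<theta> p)"
  unfolding nccenter_def by (intro ncfin_diff ncfin_smult) auto

lemma ncalg_nccenter: "p \<in> ncalg b \<Longrightarrow> nccenter \<theta> p \<in> ncalg b"
  unfolding nccenter_def by (intro ncalg_diff ncalg_smult) auto

lemma lin_nccenter: "ncfin p \<Longrightarrow> lin \<theta> (nccenter \<theta>' p) = lin \<theta> p - lin \<theta>' p * \<theta> []"
  unfolding nccenter_def
  by (subst lin_diff) (simp_all add: ncfin_smult lin_smult lin_ncone)

section \<open>Boolean cumulants of c-free variables\<close>

definition centered_alternating ::
    "(word \<Rightarrow> complex) \<Rightarrow> (word \<Rightarrow> complex) \<Rightarrow> bool \<Rightarrow> (bool \<times> ncp) list \<Rightarrow> bool" where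
  "centered_alternating \<phi> \<psi> b us \<longleftrightarrow>
     us \<noteq> [] \<and> fst (hd us) = b \<and> (\<forall>(a, u)\<in>set us. ncfin u \<and> u \<in> ncalg a) \<and>
     lin \<phi> (snd (hd us)) = 0 \<and> (\<forall>(a, u)\<in>set (tl us). lin \<psi> u = 0) \<and>
     successively (\<noteq>) (map fst us)"

inductive_set centered_span :: "(word \<Rightarrow> complex) \<Rightarrow> (word \<Rightarrow> complex) \<Rightarrow> bool \<Rightarrow> ncp set"
  for \<phi> \<psi> b where
  zero: "(\<lambda>w. 0) \<in> centered_span \<phi> \<psi> b"
| add: "p \<in> centered_span \<phi> \<psi> b \<Longrightarrow> q \<in> centered_span \<phi> \<psi> b \<Longrightarrow> (\<lambda>w. p w + q w) \<in> centered_span \<phi> \<psi> b"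
| smult: "p \<in> centered_span \<phi> \<psi> b \<Longrightarrow> (\<lambda>w. c * p w) \<in> centered_span \<phi> \<psi> b"
| ncprod: "centered_alternating \<phi> \<psi> b us \<Longrightarrow> ncprod (map snd us) \<in> centered_span \<phi> \<psi> b"

lemma ncfin_ncprod_centered_alternating:
  "centered_alternating \<phi> \<psi> b us \<Longrightarrow> ncfin (ncprod (map snd us))"
  by (rule ncfin_ncprod) (auto simp: centered_alternating_def)

lemma lin_ncprod_centered_alternating:
  assumes cf: "cfree \<phi> \<psi>" and unital_phi: "\<phi> [] = 1" and unital_psi: "\<psi> [] = 1"
    and alt: "centered_alternating \<phi> \<psi> b us"
  shows "lin \<phi> (ncprod (map snd us)) = 0"
proof -
  obtain b1 u1 rest where us: "us = (b1, u1) # rest"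
    using alt by (cases us) (auto simp: centered_alternating_def)
  have u1: "ncfin u1" "u1 \<in> ncalg b1" "lin \<phi> u1 = 0"
    using alt us by (auto simp: centered_alternating_def)
  have rest: "\<forall>(a, u)\<in>set rest. ncfin u \<and> u \<in> ncalg a \<and> lin \<psi> u = 0"
    using alt us by (auto simp: centered_alternating_def)
  have alternating: "successively (\<noteq>) (map fst ((b1, u1) # rest))"
    using alt by (auto simp: us centered_alternating_def)
  show ?thesis
  proof (cases "rest = []")
    case True
    then show ?thesis using us u1 by simp
  next
    case False
    \<comment> \<open>Split u1 as (u1 - \<psi> u1) + \<psi> u1: c-freeness factorises \<phi> on both resulting products,
      and the two contributions cancel because \<phi> u1 = 0.\<close>
    let ?R = "ncprod (map snd rest)" and ?c = "nccenter \<psi> u1"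
    have R: "ncfin ?R"
      using rest by (intro ncfin_ncprod) auto
    have c: "ncfin ?c" "lin \<psi> ?c = 0" "lin \<phi> ?c = - lin \<psi> u1"
      using u1 unital_phi unital_psi by (simp_all add: ncfin_nccenter lin_nccenter)
    have "lin \<phi> ?R = (\<Prod>u\<leftarrow>map snd rest. lin \<phi> u)"
      using cf[unfolded cfree_def, rule_format, of rest] False rest alternating
      by (cases rest) auto
    moreover have "lin \<phi> (ncmul ?c ?R) = lin \<phi> ?c * (\<Prod>u\<leftarrow>map snd rest. lin \<phi> u)"
      using cf[unfolded cfree_def, rule_format, of "(b1, ?c) # rest"] rest alternating c
        ncalg_nccenter[OF u1(2)] by (auto simp: ncprod_Cons)
    moreover have "ncprod (map snd us) = (\<lambda>w. ncmul ?c ?R w + lin \<psi> u1 * ?R w)"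
      using ncmul_nccenter_left[of u1 ?R \<psi>] by (simp add: us ncprod_Cons)
    ultimately show ?thesis
      using R c by (simp add: lin_add ncfin_ncmul ncfin_smult lin_smult)
  qed
qed

lemma centered_span_lin:
  assumes cf: "cfree \<phi> \<psi>" and unital_phi: "\<phi> [] = 1" and unital_psi: "\<psi> [] = 1"
  shows "p \<in> centered_span \<phi> \<psi> b \<Longrightarrow> ncfin p \<and> lin \<phi> p = 0"
proof (induction rule: centered_span.induct)
  case (ncprod us)
  then show ?case
    using lin_ncprod_centered_alternating[OF assms] ncfin_ncprod_centered_alternating by blast
qed (simp_all add: lin_add ncfin_add lin_smult ncfin_smult)

lemma centered_alternating_snoc:
  assumes "centered_alternating \<phi> \<psi> b us" "a \<noteq> fst (last us)"
    and "ncfin u" "u \<in> ncalg a" "lin \<psi> u = 0"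
  shows "centered_alternating \<phi> \<psi> b (us @ [(a, u)])"
  using assms
  by (cases us rule: rev_exhaust)
     (auto simp: centered_alternating_def successively_append_iff hd_append tl_append2)

lemma centered_alternating_butlast:
  assumes "centered_alternating \<phi> \<psi> b (us @ [x])" "us \<noteq> []"
  shows "centered_alternating \<phi> \<psi> b us"
  using assms
  by (auto simp: centered_alternating_def successively_append_iff hd_append tl_append2)

lemma ncmul_ncvar_centered_alternating_new_algebra:
  assumes unital_psi: "\<psi> [] = 1" and alt: "centered_alternating \<phi> \<psi> b us"
    and new: "(c = LX) \<noteq> fst (last us)"
  shows "ncmul (ncprod (map snd us)) (ncvar c) \<in> centered_span \<phi> \<psi> b"
proof -
  let ?x = "nccenter \<psi> (ncvar c)"
  have alt': "centered_alternating \<phi> \<psi> b (us @ [(c = LX, ?x)])"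
    using alt new unital_psi ncalg_ncvar[of c]
    by (intro centered_alternating_snoc) (simp_all add: ncfin_nccenter ncalg_nccenter lin_nccenter)
  have eq: "ncmul (ncprod (map snd us)) (ncvar c)
      = (\<lambda>w. ncprod (map snd (us @ [(c = LX, ?x)])) w + lin \<psi> (ncvar c) * ncprod (map snd us) w)"
    using ncmul_nccenter_right[of "ncprod (map snd us)" "ncvar c" \<psi>] by (simp add: ncprod_snoc)
  show ?thesis
    unfolding eq by (intro centered_span.add centered_span.smult centered_span.ncprod alt alt')
qed

lemma ncmul_ncvar_centered_alternating_same_algebra:
  assumes unital_psi: "\<psi> [] = 1" and alt: "centered_alternating \<phi> \<psi> b (us @ [(a, u)])"
    and "us \<noteq> []" and same: "(c = LX) = a"
  shows "ncmul (ncprod (map snd (us @ [(a, u)]))) (ncvar c) \<in> centered_span \<phi> \<psi> b"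
proof -
  let ?uc = "ncmul u (ncvar c)"
  let ?y = "nccenter \<psi> ?uc"
  have uc: "ncfin ?uc" "?uc \<in> ncalg a"
    using alt same ncalg_ncvar[of c]
    by (auto simp: centered_alternating_def intro: ncfin_ncmul ncalg_ncmul)
  have alt_us: "centered_alternating \<phi> \<psi> b us"
    using alt \<open>us \<noteq> []\<close> by (rule centered_alternating_butlast)
  have "a \<noteq> fst (last us)"
    using alt \<open>us \<noteq> []\<close> by (simp add: centered_alternating_def successively_append_iff last_map)
  then have alt': "centered_alternating \<phi> \<psi> b (us @ [(a, ?y)])"
    using alt_us uc unital_psi
    by (intro centered_alternating_snoc) (simp_all add: ncfin_nccenter ncalg_nccenter lin_nccenter)
  have "ncmul (ncprod (map snd (us @ [(a, u)]))) (ncvar c) = ncmul (ncprod (map snd us)) ?uc"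
    by (simp add: ncprod_snoc ncmul_assoc)
  also have "\<dots> = (\<lambda>w. ncprod (map snd (us @ [(a, ?y)])) w + lin \<psi> ?uc * ncprod (map snd us) w)"
    using ncmul_nccenter_right[of "ncprod (map snd us)" ?uc \<psi>] by (simp add: ncprod_snoc)
  finally show ?thesis
    by (simp only:) (intro centered_span.add centered_span.smult centered_span.ncprod alt_us alt')
qed

lemma ncmul_ncvar_centered_alternating:
  assumes unital_phi: "\<phi> [] = 1" and unital_psi: "\<psi> [] = 1"
    and alt: "centered_alternating \<phi> \<psi> b us"
  shows "\<exists>q k. q \<in> centered_span \<phi> \<psi> b \<and>
           ncmul (ncprod (map snd us)) (ncvar c) = (\<lambda>w. q w + k * ncone w) \<and> ((c = LX) \<noteq> b \<longrightarrow> k = 0)"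
proof -
  obtain init a u where us: "us = init @ [(a, u)]"
    using alt by (cases us rule: rev_exhaust) (auto simp: centered_alternating_def)
  consider "(c = LX) \<noteq> a" | "(c = LX) = a" "init \<noteq> []" | "(c = LX) = a" "init = []"
    by blast
  then show ?thesis
  proof cases
    case 1
    then show ?thesis
      using ncmul_ncvar_centered_alternating_new_algebra[OF unital_psi alt] us by fastforce
  next
    case 2
    then show ?thesis
      using ncmul_ncvar_centered_alternating_same_algebra[OF unital_psi alt[unfolded us]] us by fastforce
  next
    case 3
    let ?uc = "ncmul u (ncvar c)"
    have "a = b" "c = LX \<longleftrightarrow> b" "ncfin ?uc" "?uc \<in> ncalg b"
      using alt 3 ncalg_ncvar[of c]
      by (auto simp: us centered_alternating_def intro: ncfin_ncmul ncalg_ncmul)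
    then have "centered_alternating \<phi> \<psi> b [(b, nccenter \<phi> ?uc)]"
      using unital_phi by (simp add: centered_alternating_def ncfin_nccenter ncalg_nccenter lin_nccenter)
    moreover have "ncmul (ncprod (map snd us)) (ncvar c) = (\<lambda>w. nccenter \<phi> ?uc w + lin \<phi> ?uc * ncone w)"
      using 3 by (simp add: us nccenter_def)
    ultimately show ?thesis
      using \<open>c = LX \<longleftrightarrow> b\<close> centered_span.ncprod[of \<phi> \<psi> b "[(b, nccenter \<phi> ?uc)]"] by fastforce
  qed
qed

lemma ncmul_ncvar_centered_span:
  assumes unital_phi: "\<phi> [] = 1" and unital_psi: "\<psi> [] = 1"
  shows "p \<in> centered_span \<phi> \<psi> b \<Longrightarrow> \<exists>q k. q \<in> centered_span \<phi> \<psi> b \<and>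
           ncmul p (ncvar c) = (\<lambda>w. q w + k * ncone w) \<and> ((c = LX) \<noteq> b \<longrightarrow> k = 0)"
proof (induction rule: centered_span.induct)
  case zero
  have "ncmul (\<lambda>w. 0) (ncvar c) = (\<lambda>w. 0 + 0 * ncone w)"
    by (simp add: ncmul_def)
  then show ?case
    using centered_span.zero by blast
next
  case (add p q)
  from add.IH(1) obtain p' k where p': "p' \<in> centered_span \<phi> \<psi> b"
    "ncmul p (ncvar c) = (\<lambda>w. p' w + k * ncone w)" "(c = LX) \<noteq> b \<longrightarrow> k = 0"
    by blast
  from add.IH(2) obtain q' l where q': "q' \<in> centered_span \<phi> \<psi> b"
    "ncmul q (ncvar c) = (\<lambda>w. q' w + l * ncone w)" "(c = LX) \<noteq> b \<longrightarrow> l = 0"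
    by blast
  have "ncmul (\<lambda>w. p w + q w) (ncvar c) = (\<lambda>w. (p' w + q' w) + (k + l) * ncone w)"
    by (simp add: ncmul_add_left p'(2) q'(2) algebra_simps)
  then show ?case
    using p' q' by (intro exI[of _ "\<lambda>w. p' w + q' w"] exI[of _ "k + l"] conjI centered_span.add) simp_all
next
  case (smult p a)
  then obtain p' k where p': "p' \<in> centered_span \<phi> \<psi> b"
    "ncmul p (ncvar c) = (\<lambda>w. p' w + k * ncone w)" "(c = LX) \<noteq> b \<longrightarrow> k = 0"
    by blast
  have "ncmul (\<lambda>w. a * p w) (ncvar c) = (\<lambda>w. a * p' w + (a * k) * ncone w)"
    by (simp add: ncmul_smult_left p'(2) algebra_simps)
  then show ?case
    using p' by (intro exI[of _ "\<lambda>w. a * p' w"] exI[of _ "a * k"] conjI centered_span.smult) simp_all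
next
  case (ncprod us)
  then show ?case
    using ncmul_ncvar_centered_alternating[of \<phi> \<psi>, OF unital_phi unital_psi] by blast
qed

declare bcum.simps [simp del]

lemma bcum_nonempty:
  "w \<noteq> [] \<Longrightarrow> bcum \<phi> w = \<phi> w - (\<Sum>k\<in>{1..<length w}. bcum \<phi> (take k w) * \<phi> (drop k w))"
  by (subst bcum.simps) simp

text \<open>By the moment-cumulant recursion, \<phi> of the product of \<open>bcum_residual \<phi> w\<close> with a letter c
  is the Boolean cumulant of wc (\<open>bcum_snoc\<close>).\<close>

definition bcum_residual :: "(word \<Rightarrow> complex) \<Rightarrow> word \<Rightarrow> ncp" where
  "bcum_residual \<phi> w =
     (\<lambda>x. ncmon w x - (\<Sum>k\<in>{1..length w}. bcum \<phi> (take k w) * ncmon (drop k w) x))"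

lemma ncmul_bcum_residual_ncvar:
  "ncmul (bcum_residual \<phi> w) (ncvar c) =
     (\<lambda>x. ncmon (w @ [c]) x - (\<Sum>k\<in>{1..length w}. bcum \<phi> (take k w) * ncmon (drop k w @ [c]) x))"
  unfolding bcum_residual_def ncvar_eq_ncmon
  by (simp add: ncmul_diff_left ncmul_sum_left ncmul_smult_left ncmul_ncmon)

lemma bcum_snoc:
  assumes "w \<noteq> []"
  shows "bcum \<phi> (w @ [c]) = lin \<phi> (ncmul (bcum_residual \<phi> w) (ncvar c))"
proof -
  have "(\<Sum>k\<in>{1..<length (w @ [c])}. bcum \<phi> (take k (w @ [c])) * \<phi> (drop k (w @ [c])))
      = (\<Sum>k\<in>{1..length w}. bcum \<phi> (take k w) * \<phi> (drop k w @ [c]))"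
    by (rule sum.cong) auto
  then show ?thesis
    unfolding ncmul_bcum_residual_ncvar
    by (simp add: bcum_nonempty lin_diff ncfin_sum ncfin_smult lin_sum lin_smult)
qed

lemma bcum_residual_snoc:
  assumes "w \<noteq> []"
  shows "bcum_residual \<phi> (w @ [c]) = (\<lambda>x. ncmul (bcum_residual \<phi> w) (ncvar c) x - bcum \<phi> (w @ [c]) * ncone x)"
proof -
  have "(\<Sum>k\<in>{1..length w}. bcum \<phi> (take k (w @ [c])) * ncmon (drop k (w @ [c])) x)
      = (\<Sum>k\<in>{1..length w}. bcum \<phi> (take k w) * ncmon (drop k w @ [c]) x)" for x
    by (rule sum.cong) auto
  then show ?thesis
    unfolding ncmul_bcum_residual_ncvar
    by (simp add: bcum_residual_def ncone_eq_ncmon fun_eq_iff algebra_simps)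
qed

lemma bcum_residual_single: "bcum_residual \<phi> [a] = (\<lambda>x. ncvar a x - \<phi> [a] * ncone x)"
  by (simp add: bcum_residual_def bcum_nonempty ncvar_eq_ncmon ncone_eq_ncmon)

lemma bcum_residual_in_centered_span:
  assumes cf: "cfree \<phi> \<psi>" and unital_phi: "\<phi> [] = 1" and unital_psi: "\<psi> [] = 1"
  shows "w \<noteq> [] \<Longrightarrow> bcum_residual \<phi> w \<in> centered_span \<phi> \<psi> (hd w = LX)"
proof (induction w rule: rev_induct)
  case (snoc c w)
  show ?case
  proof (cases "w = []")
    case True
    have "centered_alternating \<phi> \<psi> (c = LX) [(c = LX, bcum_residual \<phi> [c])]"
      using unital_phi ncalg_ncvar[of c]
      by (simp add: centered_alternating_def bcum_residual_single ncfin_diff ncfin_smult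
          ncalg_diff ncalg_smult lin_diff lin_smult lin_ncone ncvar_eq_ncmon)
    then show ?thesis
      using centered_span.ncprod True by fastforce
  next
    case False
    obtain q k where q: "q \<in> centered_span \<phi> \<psi> (hd w = LX)"
      and qk: "ncmul (bcum_residual \<phi> w) (ncvar c) = (\<lambda>x. q x + k * ncone x)"
      using ncmul_ncvar_centered_span[OF unital_phi unital_psi snoc.IH[OF False]] by blast
    have "ncfin q" "lin \<phi> q = 0"
      using centered_span_lin[OF cf unital_phi unital_psi q] by auto
    then have "bcum \<phi> (w @ [c]) = k"
      using bcum_snoc[OF False] unital_phi by (simp add: qk lin_add ncfin_smult lin_smult lin_ncone)
    then have "bcum_residual \<phi> (w @ [c]) = q"
      by (simp add: bcum_residual_snoc[OF False] qk)
    then show ?thesis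
      using q False by simp
  qed
qed simp

theorem cfree_bcum_eq_0:
  assumes cf: "cfree \<phi> \<psi>" and unital_phi: "\<phi> [] = 1" and unital_psi: "\<psi> [] = 1"
    and "w \<noteq> []" and "hd w \<noteq> last w"
  shows "bcum \<phi> w = 0"
proof -
  obtain v c where w: "w = v @ [c]"
    using assms(4) by (cases w rule: rev_exhaust) auto
  have "v \<noteq> []"
    using assms(5) w by auto
  then have "(c = LX) \<noteq> (hd v = LX)"
    using assms(5) w by (cases c; cases "hd v") auto
  then obtain q where q: "q \<in> centered_span \<phi> \<psi> (hd v = LX)"
    and "ncmul (bcum_residual \<phi> v) (ncvar c) = q"
    using ncmul_ncvar_centered_span[OF unital_phi unital_psi
        bcum_residual_in_centered_span[OF cf unital_phi unital_psi \<open>v \<noteq> []\<close>], of c]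
    by fastforce
  then show ?thesis
    using bcum_snoc[OF \<open>v \<noteq> []\<close>] centered_span_lin[OF cf unital_phi unital_psi q] w by simp
qed

section \<open>The moment recursion for AX + BY\<close>

definition words :: "nat \<Rightarrow> word set" where
  "words n = {w. length w = n}"

lemma finite_words [simp]: "finite (words n)"
  using finite_lists_length_eq[of "UNIV :: L set" n] by (simp add: words_def)

lemma sum_words_Suc: "(\<Sum>w\<in>words (Suc n). g w) = (\<Sum>l\<in>UNIV. \<Sum>v\<in>words n. g (l # v))"
proof -
  have "(\<Sum>w\<in>words (Suc n). g w) = (\<Sum>(l, v)\<in>UNIV \<times> words n. g (l # v))"
    by (rule sum.reindex_bij_witness[where i = "\<lambda>(l, v). l # v" and j = "\<lambda>w. (hd w, tl w)"])
       (auto simp: words_def length_Suc_conv)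
  then show ?thesis
    by (simp add: sum.cartesian_product)
qed

lemma sum_words_split:
  assumes "k \<le> n"
  shows "(\<Sum>w\<in>words n. g w) = (\<Sum>u\<in>words k. \<Sum>v\<in>words (n - k). g (u @ v))"
proof -
  have "(\<Sum>w\<in>words n. g w) = (\<Sum>(u, v)\<in>words k \<times> words (n - k). g (u @ v))"
    by (rule sum.reindex_bij_witness[where i = "\<lambda>(u, v). u @ v" and j = "\<lambda>w. (take k w, drop k w)"])
       (use assms in \<open>auto simp: words_def\<close>)
  then show ?thesis
    by (simp add: sum.cartesian_product)
qed

definition letter_mat :: "'a^'n^'n \<Rightarrow> 'a^'n^'n \<Rightarrow> L \<Rightarrow> 'a^'n^'n" where
  "letter_mat A B l = (case l of LX \<Rightarrow> A | LY \<Rightarrow> B)"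

primrec word_mat :: "'a::semiring_1^'n^'n \<Rightarrow> 'a^'n^'n \<Rightarrow> word \<Rightarrow> 'a^'n^'n" where
  "word_mat A B [] = mat 1"
| "word_mat A B (l # w) = letter_mat A B l ** word_mat A B w"

lemma word_mat_append: "word_mat A B (u @ v) = word_mat A B u ** word_mat A B v"
  by (induction u) (simp_all add: matrix_mul_assoc)

lemma linpenc_single_letters: "linpenc A B i j u \<noteq> 0 \<Longrightarrow> length u = 1"
  by (auto simp: linpenc_def split: if_splits)

lemma linpenc_letter: "linpenc A B i j [l] = letter_mat A B l $ i $ j"
  by (cases l) (simp_all add: linpenc_def letter_mat_def)

lemma Psi_eq_word_mat: "Psi A B n i j w = (if length w = n then word_mat A B w $ i $ j else 0)"
proof (induction n arbitrary: i j w)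
  case 0
  then show ?case
    by (simp add: Psi_def ncmatone_def ncone_def mat_def)
next
  case (Suc n)
  have "Psi A B (Suc n) i j w = (\<Sum>k\<in>UNIV. ncmul (linpenc A B i k) (Psi A B n k j) w)"
    by (simp add: Psi_def ncmatmul_def)
  also have "\<dots> = (if w = [] then 0 else \<Sum>k\<in>UNIV. letter_mat A B (hd w) $ i $ k * Psi A B n k j (tl w))"
    by (simp add: ncmul_single_letters_left[OF linpenc_single_letters] linpenc_letter)
  also have "\<dots> = (if length w = Suc n then word_mat A B w $ i $ j else 0)"
    by (cases w) (simp_all add: Suc.IH matrix_matrix_mult_def)
  finally show ?case .
qed

lemma ncfin_Psi: "ncfin (Psi A B n i j)"
  unfolding ncfin_def
  by (rule finite_subset[OF _ finite_words[of n]]) (auto simp: Psi_eq_word_mat words_def split: if_splits)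

lemma lin_Psi: "lin \<theta> (Psi A B n i j) = (\<Sum>w\<in>words n. word_mat A B w $ i $ j * \<theta> w)"
  by (subst lin_eq_sum_superset[OF finite_words[of n]]) (auto simp: Psi_eq_word_mat words_def split: if_splits)

lemma lin_ncvar_Psi:
  "lin \<theta> (ncmul (ncvar l) (Psi A B n i j)) = (\<Sum>v\<in>words n. word_mat A B v $ i $ j * \<theta> (l # v))"
proof -
  have "lin \<theta> (ncmul (ncvar l) (Psi A B n i j))
      = (\<Sum>w\<in>(\<lambda>v. l # v) ` words n. ncmul (ncvar l) (Psi A B n i j) w * \<theta> w)"
    by (rule lin_eq_sum_superset[OF finite_imageI[OF finite_words]])
       (auto simp: ncmul_ncvar_left Psi_eq_word_mat words_def split: if_splits intro!: image_eqI[of _ _ "tl _"])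
  also have "\<dots> = (\<Sum>v\<in>words n. word_mat A B v $ i $ j * \<theta> (l # v))"
    by (subst sum.reindex) (auto simp: inj_on_def ncmul_ncvar_left Psi_eq_word_mat words_def)
  finally show ?thesis .
qed

definition smult_mat :: "'a::times \<Rightarrow> 'a^'n^'m \<Rightarrow> 'a^'n^'m" where
  "smult_mat c M = (\<chi> i j. c * M $ i $ j)"

lemma smult_mat_mult:
  "smult_mat a M ** smult_mat b N = smult_mat (a * b) (M ** (N :: 'a::comm_semiring_1^_^_))"
  by (simp add: matrix_matrix_mult_def vec_eq_iff smult_mat_def sum_distrib_left algebra_simps)

lemma matrix_mult_smult_mat: "M ** smult_mat b N = smult_mat b (M ** (N :: 'a::comm_semiring_1^_^_))"
  by (simp add: matrix_matrix_mult_def vec_eq_iff smult_mat_def sum_distrib_left algebra_simps)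

lemma sum_smult_mat: "(\<Sum>k\<in>K. smult_mat (c k) M) = smult_mat (\<Sum>k\<in>K. c k) (M :: 'a::semiring_0^_^_)"
  by (simp add: vec_eq_iff smult_mat_def sum_distrib_right)

lemma sum_matrix_mult_left: "(\<Sum>k\<in>K. f k) ** M = (\<Sum>k\<in>K. f k ** (M :: 'a::semiring_1^_^_))"
  unfolding matrix_matrix_mult_def vec_eq_iff
  by (simp add: sum_distrib_right) (intro allI sum.swap)

lemma sum_matrix_mult_right: "M ** (\<Sum>k\<in>K. f k) = (\<Sum>k\<in>K. M ** (f k :: 'a::semiring_1^_^_))"
  unfolding matrix_matrix_mult_def vec_eq_iff
  by (simp add: sum_distrib_left) (intro allI sum.swap)

lemma matrix_mult_add_left: "(M + N) ** P = M ** P + N ** (P :: 'a::semiring_1^_^_)"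
  by (simp add: matrix_matrix_mult_def vec_eq_iff algebra_simps sum.distrib)

lemma matrix_mult_diff_left: "(M - N) ** P = M ** P - N ** (P :: 'a::ring_1^_^_)"
  by (simp add: matrix_matrix_mult_def vec_eq_iff algebra_simps sum_subtractf)

definition fps_mat_nth :: "'a fps^'n^'m \<Rightarrow> nat \<Rightarrow> 'a^'n^'m" where
  "fps_mat_nth F k = (\<chi> i j. fps_nth (F $ i $ j) k)"

lemma fps_mat_eqI: "(\<And>k. fps_mat_nth F k = fps_mat_nth G k) \<Longrightarrow> F = G"
  by (simp add: fps_mat_nth_def vec_eq_iff fps_eq_iff)

lemma fps_mat_nth_mult:
  "fps_mat_nth (F ** G) k = (\<Sum>t=0..k. fps_mat_nth F t ** fps_mat_nth (G :: 'a::comm_semiring_1 fps^_^_) (k - t))"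
  unfolding fps_mat_nth_def matrix_matrix_mult_def vec_eq_iff
  by (simp add: fps_sum_nth fps_mult_nth) (intro allI sum.swap)

lemma fps_mat_nth_diff: "fps_mat_nth (F - G) k = fps_mat_nth F k - fps_mat_nth (G :: 'a::ab_group_add fps^_^_) k"
  by (simp add: fps_mat_nth_def vec_eq_iff)

lemma fps_mat_nth_one: "fps_mat_nth (mat 1 :: 'a::semiring_1 fps^'n^'n) k = (if k = 0 then mat 1 else 0)"
  by (simp add: fps_mat_nth_def mat_def vec_eq_iff)

lemma fps_mat_nth_zmat_mult: "fps_mat_nth (zmat A ** F) k = (if k = 0 then 0 else A ** fps_mat_nth F (k - 1))"
proof -
  have "fps_mat_nth (zmat A) t = (if t = 1 then A else 0)" for t
    by (auto simp: fps_mat_nth_def zmat_def vec_eq_iff)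
  then have "fps_mat_nth (zmat A ** F) k = (\<Sum>t=0..k. if t = 1 then A ** fps_mat_nth F (k - t) else 0)"
    unfolding fps_mat_nth_mult by (intro sum.cong) auto
  then show ?thesis
    by (simp add: sum.delta)
qed

lemma fps_mat_nth_Mom: "fps_mat_nth (Mom \<phi> A B) n = (\<Sum>w\<in>words n. smult_mat (\<phi> w) (word_mat A B w))"
  by (simp add: fps_mat_nth_def Mom_def smult_mat_def vec_eq_iff lin_Psi mult.commute)

lemma fps_mat_nth_Mom_0: "\<phi> [] = 1 \<Longrightarrow> fps_mat_nth (Mom \<phi> A B) 0 = mat 1"
  by (simp add: fps_mat_nth_Mom words_def smult_mat_def mat_def vec_eq_iff)

lemma fps_mat_nth_Fser:
  "fps_mat_nth (Fser l \<phi> A B) n = (\<Sum>v\<in>words n. smult_mat (bdelta l \<phi> (l # v)) (word_mat A B v))"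
  by (simp add: fps_mat_nth_def Fser_def smult_mat_def vec_eq_iff lin_ncvar_Psi mult.commute)

lemma moment_eq_sum_bcum:
  assumes "\<phi> [] = 1" "w \<noteq> []"
  shows "\<phi> w = (\<Sum>s=1..length w. bcum \<phi> (take s w) * \<phi> (drop s w))"
proof -
  have "{1..length w} = insert (length w) {1..<length w}"
    using assms(2) by (auto simp: Suc_le_eq)
  then show ?thesis
    using assms by (simp add: bcum_nonempty)
qed

lemma fps_mat_nth_Mom_Suc:
  assumes "\<phi> [] = 1"
  shows "fps_mat_nth (Mom \<phi> A B) (Suc n) =
    (\<Sum>t=0..n. (\<Sum>u\<in>words (Suc t). smult_mat (bcum \<phi> u) (word_mat A B u)) ** fps_mat_nth (Mom \<phi> A B) (n - t))"
    (is "_ = (\<Sum>t=0..n. ?G (Suc t) ** _)")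
proof -
  have "fps_mat_nth (Mom \<phi> A B) (Suc n) =
      (\<Sum>s=1..Suc n. \<Sum>w\<in>words (Suc n). smult_mat (bcum \<phi> (take s w) * \<phi> (drop s w)) (word_mat A B w))"
    unfolding fps_mat_nth_Mom
    by (subst sum.swap, intro sum.cong refl)
       (simp add: moment_eq_sum_bcum[of \<phi>, OF assms] sum_smult_mat words_def flip: length_greater_0_conv)
  also have "\<dots> = (\<Sum>s=1..Suc n. ?G s ** fps_mat_nth (Mom \<phi> A B) (Suc n - s))"
  proof (intro sum.cong refl)
    fix s assume "s \<in> {1..Suc n}"
    then have "(\<Sum>w\<in>words (Suc n). smult_mat (bcum \<phi> (take s w) * \<phi> (drop s w)) (word_mat A B w))
        = (\<Sum>u\<in>words s. \<Sum>v\<in>words (Suc n - s).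
             smult_mat (bcum \<phi> u) (word_mat A B u) ** smult_mat (\<phi> v) (word_mat A B v))"
      by (subst sum_words_split[of s]) (auto simp: words_def word_mat_append smult_mat_mult intro: sum.cong)
    also have "\<dots> = ?G s ** fps_mat_nth (Mom \<phi> A B) (Suc n - s)"
      by (simp add: fps_mat_nth_Mom sum_matrix_mult_left sum_matrix_mult_right) (rule sum.swap)
    finally show "(\<Sum>w\<in>words (Suc n). smult_mat (bcum \<phi> (take s w) * \<phi> (drop s w)) (word_mat A B w))
        = ?G s ** fps_mat_nth (Mom \<phi> A B) (Suc n - s)" .
  qed
  also have "\<dots> = (\<Sum>t=0..n. ?G (Suc t) ** fps_mat_nth (Mom \<phi> A B) (n - t))"
    unfolding One_nat_def sum.shift_bounds_cl_Suc_ivl by simp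
  finally show ?thesis .
qed

section \<open>Inverting I - zAF_X - zBF_Y\<close>

lemma bcum_eq_bdelta:
  assumes "cfree \<phi> \<psi>" "\<phi> [] = 1" "\<psi> [] = 1"
  shows "bcum \<phi> (l # v) = bdelta l \<phi> (l # v)"
  using cfree_bcum_eq_0[OF assms, of "l # v"] by (auto simp: bdelta_def)

lemma sum_words_bcum:
  assumes "cfree \<phi> \<psi>" "\<phi> [] = 1" "\<psi> [] = 1"
  shows "(\<Sum>u\<in>words (Suc t). smult_mat (bcum \<phi> u) (word_mat A B u))
       = A ** fps_mat_nth (Fser LX \<phi> A B) t + B ** fps_mat_nth (Fser LY \<phi> A B) t"
proof -
  have "(\<Sum>u\<in>words (Suc t). smult_mat (bcum \<phi> u) (word_mat A B u))
      = (\<Sum>l\<in>UNIV. letter_mat A B l ** fps_mat_nth (Fser l \<phi> A B) t)"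
    by (simp add: sum_words_Suc bcum_eq_bdelta[OF assms] fps_mat_nth_Fser
        sum_matrix_mult_right matrix_mult_smult_mat)
  then show ?thesis
    by (simp add: UNIV_L letter_mat_def)
qed

lemma Mom_right_inverse:
  assumes cf: "cfree \<phi> \<psi>" and unital_phi: "\<phi> [] = 1" and unital_psi: "\<psi> [] = 1"
  shows "(mat 1 - zmat A ** Fser LX \<phi> A B - zmat B ** Fser LY \<phi> A B) ** Mom \<phi> A B = mat 1"
proof (rule fps_mat_eqI)
  fix n
  let ?Mom = "Mom \<phi> A B" and ?FX = "Fser LX \<phi> A B" and ?FY = "Fser LY \<phi> A B"
  have "(mat 1 - zmat A ** ?FX - zmat B ** ?FY) ** ?Mom = ?Mom - zmat A ** (?FX ** ?Mom) - zmat B ** (?FY ** ?Mom)"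
    by (simp add: matrix_mult_diff_left matrix_mul_assoc)
  moreover have "fps_mat_nth ?Mom (Suc m) =
      A ** fps_mat_nth (?FX ** ?Mom) m + B ** fps_mat_nth (?FY ** ?Mom) m" for m
    by (simp add: fps_mat_nth_Mom_Suc[of \<phi>, OF unital_phi] sum_words_bcum[of \<phi> \<psi>, OF assms] fps_mat_nth_mult
        matrix_mult_add_left sum.distrib sum_matrix_mult_right matrix_mul_assoc)
  ultimately show "fps_mat_nth ((mat 1 - zmat A ** ?FX - zmat B ** ?FY) ** ?Mom) n = fps_mat_nth (mat 1) n"
    by (cases n) (simp_all add: fps_mat_nth_diff fps_mat_nth_zmat_mult fps_mat_nth_one fps_mat_nth_Mom_0[of \<phi>, OF unital_phi])
qed

lemma matrix_left_inverse_idom: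
  fixes A B :: "'a::idom^'n^'n"
  assumes "A ** B = mat 1"
  shows "B ** A = mat 1"
proof -
  \<comment> \<open>Over the field of fractions one-sided inverses are two-sided.\<close>
  define F where "F M = (\<chi> i j. to_fract (M $ i $ j))" for M :: "'a^'n^'n"
  have to_fract_sum: "to_fract (sum f K) = (\<Sum>k\<in>K. to_fract (f k))" for f :: "'n \<Rightarrow> 'a" and K
    by (induction K rule: infinite_finite_induct) simp_all
  have F_mult: "F (M ** N) = F M ** F N" for M N
    by (simp add: F_def matrix_matrix_mult_def vec_eq_iff to_fract_sum)
  have F_one: "F (mat 1) = mat 1"
    by (simp add: F_def mat_def vec_eq_iff)
  have F_inj: "F M = F N \<Longrightarrow> M = N" for M N
    by (simp add: F_def vec_eq_iff)
  have "F A ** F B = mat 1"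
    using assms F_mult F_one by metis
  then have "F B ** F A = mat 1"
    by (simp add: matrix_left_right_inverse)
  then show ?thesis
    using F_mult F_one F_inj by metis
qed

lemma matrix_inv_eqI:
  fixes A B :: "'a::semiring_1^'n^'n"
  assumes AB: "A ** B = mat 1" and BA: "B ** A = mat 1"
  shows "invertible A" and "matrix_inv A = B"
proof -
  show "invertible A"
    using assms unfolding invertible_def by blast
  show "matrix_inv A = B"
    unfolding matrix_inv_def
  proof (rule some_equality)
    fix C assume "A ** C = mat 1 \<and> C ** A = mat 1"
    then show "C = B"
      using AB by (metis matrix_mul_assoc matrix_mul_lid matrix_mul_rid)
  qed (use assms in simp)
qed

lemma lin_bilinear_Psi:
  "lin \<theta> (\<lambda>w. \<Sum>i\<in>UNIV. \<Sum>j\<in>UNIV. u $ i * Psi A B n i j w * v $ j)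
     = (\<Sum>i\<in>UNIV. \<Sum>j\<in>UNIV. u $ i * lin \<theta> (Psi A B n i j) * v $ j)"
proof -
  have "(\<lambda>w. u $ i * Psi A B n i j w * v $ j) = (\<lambda>w. (u $ i * v $ j) * Psi A B n i j w)" for i j
    by (simp add: fun_eq_iff algebra_simps)
  then show ?thesis
    by (simp add: lin_sum ncfin_sum ncfin_smult ncfin_Psi lin_smult algebra_simps)
qed

lemma fps_nth_bilinear_Mom:
  "fps_nth (\<Sum>i\<in>UNIV. \<Sum>j\<in>UNIV. fps_const (u $ i) * Mom \<phi> A B $ i $ j * fps_const (v $ j)) n
     = lin \<phi> (\<lambda>w. \<Sum>i\<in>UNIV. \<Sum>j\<in>UNIV. u $ i * Psi A B n i j w * v $ j)"
  by (simp add: lin_bilinear_Psi fps_sum_nth Mom_def)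

theorem theorem4:
  fixes \<phi> \<psi> :: "word \<Rightarrow> complex"
    and A B :: "complex^'n^'n"
  assumes unital_phi: "\<phi> [] = 1"
    and unital_psi: "\<psi> [] = 1"
    and cf: "cfree \<phi> \<psi>"
  shows "invertible (mat 1 - zmat A ** Fser LX \<phi> A B - zmat B ** Fser LY \<phi> A B)
       \<and> Mom \<phi> A B = matrix_inv (mat 1 - zmat A ** Fser LX \<phi> A B - zmat B ** Fser LY \<phi> A B)
       \<and> (\<forall>(P :: ncp) (m :: nat) (u :: complex^'n) (v :: complex^'n).
           ncfin P \<longrightarrow> ncdeg P = m \<longrightarrow> m \<ge> 1 \<longrightarrow>
           (\<forall>n. (\<lambda>w. \<Sum>i\<in>UNIV. \<Sum>j\<in>UNIV. u$i * Psi A B n i j w * v$j)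
                 = (if m dvd n then ncpow P (n div m) else (\<lambda>w. 0))) \<longrightarrow>
           Abs_fps (\<lambda>k. if m dvd k then lin \<phi> (ncpow P (k div m)) else 0)
             = (\<Sum>i\<in>UNIV. \<Sum>j\<in>UNIV. fps_const (u$i) * Mom \<phi> A B $ i $ j * fps_const (v$j)))"
proof (intro conjI allI impI)
  let ?M = "mat 1 - zmat A ** Fser LX \<phi> A B - zmat B ** Fser LY \<phi> A B"
  have right: "?M ** Mom \<phi> A B = mat 1"
    using Mom_right_inverse[OF cf unital_phi unital_psi] .
  then have left: "Mom \<phi> A B ** ?M = mat 1"
    by (rule matrix_left_inverse_idom)
  show "invertible ?M"
    using matrix_inv_eqI(1)[OF right left] .
  show "Mom \<phi> A B = matrix_inv ?M"
    using matrix_inv_eqI(2)[OF right left] by simp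
next
  fix P m and u v :: "complex^'n"
  assume P: "\<forall>n. (\<lambda>w. \<Sum>i\<in>UNIV. \<Sum>j\<in>UNIV. u$i * Psi A B n i j w * v$j)
                 = (if m dvd n then ncpow P (n div m) else (\<lambda>w. 0))"
  show "Abs_fps (\<lambda>k. if m dvd k then lin \<phi> (ncpow P (k div m)) else 0)
      = (\<Sum>i\<in>UNIV. \<Sum>j\<in>UNIV. fps_const (u$i) * Mom \<phi> A B $ i $ j * fps_const (v$j))"
    by (rule fps_ext) (simp add: fps_nth_bilinear_Mom P)
qed

end
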